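(* For each $n\in\mathbb{N}$ let $Y_n\colon\mathbb{I}\to\mathbb{Z}$ be a function such that for every $x\in\mathbb{I}$: (i) $Y_n(x)$ is odd; (ii) if $n=1$, $Y_1(x)\le d_1(x)<Y_1(x)+2$; (iii) if $n\ge2$ and $\epsilon_n(x)=\epsilon_{n-1}(x)$, then $Y_n(x)\le\frac{d_n(x)}{d_{n-1}(x)-1}<Y_n(x)+2$; (iv) if $n\ge2$ and $\epsilon_n(x)=-\epsilon_{n-1}(x)$, then $Y_n(x)\le\frac{d_n(x)}{d_{n-1}(x)+1}<Y_n(x)+2$. Then: (1) $\mathcal{L}(Y_n\ge 2k-1)=\frac{1}{2k-1}$ for all $n,k\in\mathbb{N}$; (2) $\frac{1}{t+2}<\mathcal{L}(Y_n\ge t)\le\frac1t$ for all $n\in\mathbb{N}$ and $t>0$; (3) $\{Y_n\}_{n\ge1}$ is a sequence of independent, identically distributed random variables (with respect to $\mathcal{L}$).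
   Context: $\mathcal{L}$ is Lebesgue measure, $\mathbb{I}=(0,1)\setminus\mathbb{Q}$. Define $T\colon[0,1)\to[0,1)$ by: for $k\in\mathbb{N}$, $Tx=\lceil 1/x\rceil x-1$ if $x\in(\frac{1}{2k},\frac{1}{2k-1})$; $Tx=1-\lfloor 1/x\rfloor x$ if $x\in(\frac{1}{2k+1},\frac{1}{2k})$; $Tx=0$ if $x\in\{0\}\cup\{1/n\colon n\ge 2\}$. For $x\in(0,1)$ define $d_1(x)=\lceil 1/x\rceil$, $s_1(x)=1$ if $x\in[\frac{1}{2k},\frac{1}{2k-1})$ for some $k$, and $d_1(x)=\lfloor 1/x\rfloor$, $s_1(x)=-1$ if $x\in[\frac{1}{2k+1},\frac{1}{2k})$ for some $k$; $d_{n+1}(x)=d_1(T^nx)$, $s_{n+1}(x)=s_1(T^nx)$, $\epsilon_1(x)=1$, $\epsilon_{n+1}(x)=\prod_{k=1}^ns_k(x)$. *)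

theory Defs
  imports "HOL-Probability.Probability"
begin

definition Irr :: "real set" where
  "Irr = {0<..<1} - \<rat>"

definition Tmap :: "real \<Rightarrow> real" where
  "Tmap x =
    (if x = 0 \<or> (\<exists>n::nat. n \<ge> 2 \<and> x = 1 / real n) then 0
     else if (\<exists>k::nat. k \<ge> 1 \<and> 1 / real (2*k) < x \<and> x < 1 / real (2*k - 1))
       then real_of_int \<lceil>1 / x\<rceil> * x - 1
     else if (\<exists>k::nat. k \<ge> 1 \<and> 1 / real (2*k+1) < x \<and> x < 1 / real (2*k))
       then 1 - real_of_int \<lfloor>1 / x\<rfloor> * x
     else 0)"

definition d1 :: "real \<Rightarrow> int" where
  "d1 x =
    (if (\<exists>k::nat. k \<ge> 1 \<and> 1 / real (2*k) \<le> x \<and> x < 1 / real (2*k - 1)) then \<lceil>1 / x\<rceil>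
     else if (\<exists>k::nat. k \<ge> 1 \<and> 1 / real (2*k+1) \<le> x \<and> x < 1 / real (2*k)) then \<lfloor>1 / x\<rfloor>
     else 0)"

definition s1 :: "real \<Rightarrow> int" where
  "s1 x =
    (if (\<exists>k::nat. k \<ge> 1 \<and> 1 / real (2*k) \<le> x \<and> x < 1 / real (2*k - 1)) then 1
     else if (\<exists>k::nat. k \<ge> 1 \<and> 1 / real (2*k+1) \<le> x \<and> x < 1 / real (2*k)) then -1
     else 0)"

definition dig :: "nat \<Rightarrow> real \<Rightarrow> int" where
  "dig n x = d1 ((Tmap ^^ (n - 1)) x)"

definition sgn_s :: "nat \<Rightarrow> real \<Rightarrow> int" where
  "sgn_s n x = s1 ((Tmap ^^ (n - 1)) x)"

definition eps :: "nat \<Rightarrow> real \<Rightarrow> int" where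
  "eps n x = (\<Prod>k\<in>{1..<n}. sgn_s k x)"

end

theory Submission
  imports Defs
begin

text \<open>Write \<open>z\<^sub>n = T\<^sup>n x\<close> and \<open>m\<^sub>n = d\<^sub>n - s\<^sub>n\<close> (with \<open>m\<^sub>0 = 1\<close>). The hypotheses force
  \<open>Y\<^sub>n\<^sub>+\<^sub>1\<close> to be the largest odd integer not exceeding \<open>1 / u\<^sub>n\<close>, where
  \<open>u\<^sub>n = m\<^sub>n z\<^sub>n \<in> (0,1)\<close>. With \<open>j = \<lfloor>1 / z\<^sub>n\<rfloor>\<close> one has \<open>m\<^sub>n\<^sub>+\<^sub>1 = 2 \<lfloor>j / 2\<rfloor> + 1\<close> and
  \<open>u\<^sub>n\<^sub>+\<^sub>1 = F z\<^sub>n\<close>, where \<open>F\<close> maps every interval \<open>1/(j+1) < z < 1/j\<close> affinely onto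
  \<open>(0,1)\<close>. Hence, by induction on \<open>n\<close>, conditionally on \<open>Y\<^sub>1, \<dots>, Y\<^sub>n\<close> and \<open>m\<^sub>n\<close> the
  point \<open>u\<^sub>n\<close> is uniformly distributed on \<open>(0,1)\<close>. So \<open>Y\<^sub>n\<^sub>+\<^sub>1\<close> is independent of
  the past and distributed as the largest odd integer not exceeding \<open>1 / U\<close>, \<open>U\<close> uniform on
  \<open>(0,1)\<close>; in particular \<open>P(Y\<^sub>n \<ge> 2k - 1) = P(U \<le> 1 / (2k - 1)) = 1 / (2k - 1)\<close>.\<close>

section \<open>The map \<open>T\<close> on irrationals\<close>

lemma Irr_floor_inverse:
  assumes "z \<in> Irr"
  shows "0 < z" "z < 1" "1 \<le> \<lfloor>1 / z\<rfloor>"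
    "of_int \<lfloor>1 / z\<rfloor> < 1 / z" "1 / z < of_int \<lfloor>1 / z\<rfloor> + 1"
proof -
  show z: "0 < z" "z < 1"
    using assms by (auto simp: Irr_def)
  then show "1 \<le> \<lfloor>1 / z\<rfloor>"
    by (simp add: one_le_floor)
  have "1 / z \<noteq> of_int \<lfloor>1 / z\<rfloor>"
  proof
    assume "1 / z = of_int \<lfloor>1 / z\<rfloor>"
    then have "z = 1 / of_int \<lfloor>1 / z\<rfloor>"
      by (metis divide_divide_eq_right div_by_1 mult_1)
    then have "z \<in> \<rat>"
      by (metis Rats_divide Rats_of_int Rats_1)
    then show False
      using assms by (simp add: Irr_def)
  qed
  then show "of_int \<lfloor>1 / z\<rfloor> < 1 / z" "1 / z < of_int \<lfloor>1 / z\<rfloor> + 1"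
    using of_int_floor_le[of "1 / z"] real_of_int_floor_add_one_gt[of "1 / z"] by linarith+
qed

lemma Irr_in_branch_iff:
  fixes a :: nat
  assumes z: "z \<in> Irr" and a: "1 \<le> a"
  shows "1 / real (a + 1) \<le> z \<and> z < 1 / real a \<longleftrightarrow> \<lfloor>1 / z\<rfloor> = int a"
    and "1 / real (a + 1) < z \<and> z < 1 / real a \<longleftrightarrow> \<lfloor>1 / z\<rfloor> = int a"
proof -
  note F = Irr_floor_inverse[OF z]
  have floor_iff: "\<lfloor>1 / z\<rfloor> = int a \<longleftrightarrow> real a < 1 / z \<and> 1 / z < real a + 1"
  proof
    assume "\<lfloor>1 / z\<rfloor> = int a"
    then show "real a < 1 / z \<and> 1 / z < real a + 1"
      using F(4,5) by simp
  qed (simp add: floor_eq_iff)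
  have "1 / z \<noteq> real a + 1"
  proof
    assume "1 / z = real a + 1"
    then have "\<lfloor>1 / z\<rfloor> = int a + 1"
      by simp
    then show False
      using F(4) \<open>1 / z = real a + 1\<close> by simp
  qed
  moreover have "1 / real (a + 1) \<le> z \<longleftrightarrow> 1 / z \<le> real a + 1"
    "1 / real (a + 1) < z \<longleftrightarrow> 1 / z < real a + 1" "z < 1 / real a \<longleftrightarrow> real a < 1 / z"
    using F(1) a by (auto simp: field_simps)
  ultimately show "1 / real (a + 1) \<le> z \<and> z < 1 / real a \<longleftrightarrow> \<lfloor>1 / z\<rfloor> = int a"
    and "1 / real (a + 1) < z \<and> z < 1 / real a \<longleftrightarrow> \<lfloor>1 / z\<rfloor> = int a"
    unfolding floor_iff by linarith+
qed

lemma Irr_odd_branch_iff: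
  assumes z: "z \<in> Irr"
  shows "(\<exists>k::nat. k \<ge> 1 \<and> 1 / real (2*k) \<le> z \<and> z < 1 / real (2*k - 1)) \<longleftrightarrow> odd \<lfloor>1 / z\<rfloor>"
    and "(\<exists>k::nat. k \<ge> 1 \<and> 1 / real (2*k) < z \<and> z < 1 / real (2*k - 1)) \<longleftrightarrow> odd \<lfloor>1 / z\<rfloor>"
proof -
  have branch: "(1 / real (2*k) \<le> z \<and> z < 1 / real (2*k - 1) \<longleftrightarrow> \<lfloor>1 / z\<rfloor> = int (2*k - 1))"
    "(1 / real (2*k) < z \<and> z < 1 / real (2*k - 1) \<longleftrightarrow> \<lfloor>1 / z\<rfloor> = int (2*k - 1))"
    if "k \<ge> 1" for k :: nat
    using Irr_in_branch_iff[OF z, of "2*k - 1"] that by simp_all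
  have "(\<exists>k::nat. k \<ge> 1 \<and> \<lfloor>1 / z\<rfloor> = int (2*k - 1)) \<longleftrightarrow> odd \<lfloor>1 / z\<rfloor>"
  proof
    assume "odd \<lfloor>1 / z\<rfloor>"
    then obtain b where b: "\<lfloor>1 / z\<rfloor> = 2 * b + 1"
      by (blast elim: oddE)
    then have "b \<ge> 0"
      using Irr_floor_inverse(3)[OF z] by linarith
    with b show "\<exists>k::nat. k \<ge> 1 \<and> \<lfloor>1 / z\<rfloor> = int (2*k - 1)"
      by (intro exI[of _ "nat b + 1"]) auto
  qed auto
  then show "(\<exists>k::nat. k \<ge> 1 \<and> 1 / real (2*k) \<le> z \<and> z < 1 / real (2*k - 1)) \<longleftrightarrow> odd \<lfloor>1 / z\<rfloor>"
    and "(\<exists>k::nat. k \<ge> 1 \<and> 1 / real (2*k) < z \<and> z < 1 / real (2*k - 1)) \<longleftrightarrow> odd \<lfloor>1 / z\<rfloor>"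
    using branch by blast+
qed

lemma Irr_even_branch_iff:
  assumes z: "z \<in> Irr"
  shows "(\<exists>k::nat. k \<ge> 1 \<and> 1 / real (2*k+1) \<le> z \<and> z < 1 / real (2*k)) \<longleftrightarrow> even \<lfloor>1 / z\<rfloor>"
    and "(\<exists>k::nat. k \<ge> 1 \<and> 1 / real (2*k+1) < z \<and> z < 1 / real (2*k)) \<longleftrightarrow> even \<lfloor>1 / z\<rfloor>"
proof -
  have branch: "(1 / real (2*k+1) \<le> z \<and> z < 1 / real (2*k) \<longleftrightarrow> \<lfloor>1 / z\<rfloor> = int (2*k))"
    "(1 / real (2*k+1) < z \<and> z < 1 / real (2*k) \<longleftrightarrow> \<lfloor>1 / z\<rfloor> = int (2*k))"
    if "k \<ge> 1" for k :: nat
    using Irr_in_branch_iff[OF z, of "2*k"] that by simp_all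
  have "(\<exists>k::nat. k \<ge> 1 \<and> \<lfloor>1 / z\<rfloor> = int (2*k)) \<longleftrightarrow> even \<lfloor>1 / z\<rfloor>"
  proof
    assume "even \<lfloor>1 / z\<rfloor>"
    then obtain b where b: "\<lfloor>1 / z\<rfloor> = 2 * b"
      by (blast elim: evenE)
    then have "b \<ge> 1"
      using Irr_floor_inverse(3)[OF z] by linarith
    with b show "\<exists>k::nat. k \<ge> 1 \<and> \<lfloor>1 / z\<rfloor> = int (2*k)"
      by (intro exI[of _ "nat b"]) auto
  qed auto
  then show "(\<exists>k::nat. k \<ge> 1 \<and> 1 / real (2*k+1) \<le> z \<and> z < 1 / real (2*k)) \<longleftrightarrow> even \<lfloor>1 / z\<rfloor>"
    and "(\<exists>k::nat. k \<ge> 1 \<and> 1 / real (2*k+1) < z \<and> z < 1 / real (2*k)) \<longleftrightarrow> even \<lfloor>1 / z\<rfloor>"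
    using branch by blast+
qed

lemma Irr_digits:
  assumes z: "z \<in> Irr"
  shows "d1 z = (if odd \<lfloor>1 / z\<rfloor> then \<lfloor>1 / z\<rfloor> + 1 else \<lfloor>1 / z\<rfloor>)"
    and "s1 z = (if odd \<lfloor>1 / z\<rfloor> then 1 else -1)"
    and "Tmap z = (if odd \<lfloor>1 / z\<rfloor> then (of_int \<lfloor>1 / z\<rfloor> + 1) * z - 1 else 1 - of_int \<lfloor>1 / z\<rfloor> * z)"
proof -
  note F = Irr_floor_inverse[OF z]
  have ceiling: "\<lceil>1 / z\<rceil> = \<lfloor>1 / z\<rfloor> + 1"
    using F(4,5) by (simp add: ceiling_eq_iff)
  have not_special: "\<not> (z = 0 \<or> (\<exists>n::nat. n \<ge> 2 \<and> z = 1 / real n))"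
    using z by (auto simp: Irr_def)
  show "d1 z = (if odd \<lfloor>1 / z\<rfloor> then \<lfloor>1 / z\<rfloor> + 1 else \<lfloor>1 / z\<rfloor>)"
    and "s1 z = (if odd \<lfloor>1 / z\<rfloor> then 1 else -1)"
    and "Tmap z = (if odd \<lfloor>1 / z\<rfloor> then (of_int \<lfloor>1 / z\<rfloor> + 1) * z - 1 else 1 - of_int \<lfloor>1 / z\<rfloor> * z)"
    unfolding d1_def s1_def Tmap_def
    using Irr_odd_branch_iff[OF z] Irr_even_branch_iff[OF z] not_special ceiling by auto
qed

lemma Tmap_Irr:
  assumes z: "z \<in> Irr"
  shows "Tmap z \<in> Irr"
proof -
  note F = Irr_floor_inverse[OF z]
  define j where "j = real_of_int \<lfloor>1 / z\<rfloor>"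
  have j: "1 \<le> j" "j < 1 / z" "1 / z < j + 1"
    using F by (simp_all add: j_def)
  have jz: "j * z < 1" "1 < (j + 1) * z"
    using j F(1) by (simp_all add: field_simps)
  have range: "0 < Tmap z \<and> Tmap z < 1"
  proof (cases "odd \<lfloor>1 / z\<rfloor>")
    case True
    have "(j + 1) * z < 2"
      using jz(1) F(2) by (simp add: algebra_simps)
    then show ?thesis
      using True jz Irr_digits(3)[OF z] by (simp add: j_def)
  next
    case False
    then show ?thesis
      using jz j F(1) Irr_digits(3)[OF z] by (simp add: j_def)
  qed
  have "z = (Tmap z + 1) / (j + 1) \<or> z = (1 - Tmap z) / j"
    using Irr_digits(3)[OF z] j by (auto simp: j_def field_simps split: if_splits)
  then have "Tmap z \<in> \<rat> \<Longrightarrow> z \<in> \<rat>"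
    unfolding j_def by (metis Rats_1 Rats_add Rats_diff Rats_divide Rats_of_int)
  then show ?thesis
    using range z by (auto simp: Irr_def)
qed

lemma orbit_Irr: "x \<in> Irr \<Longrightarrow> (Tmap ^^ n) x \<in> Irr"
  by (induction n) (simp_all add: Tmap_Irr)

section \<open>The odd digits and the rescaled orbit\<close>

definition odd_floor :: "real \<Rightarrow> int" where
  "odd_floor t = 2 * \<lfloor>(t + 1) / 2\<rfloor> - 1"

lemma odd_floor_measurable [measurable]: "odd_floor \<in> borel \<rightarrow>\<^sub>M count_space UNIV"
  unfolding odd_floor_def by measurable

lemma odd_floor_eqI:
  assumes "odd a" "of_int a \<le> t" "t < of_int a + 2"
  shows "odd_floor t = a"
proof -
  obtain b where b: "a = 2 * b + 1"
    using assms(1) by (blast elim: oddE)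
  have "\<lfloor>(t + 1) / 2\<rfloor> = b + 1"
    using assms(2,3) unfolding b by (intro floor_unique) (auto simp: field_simps)
  then show ?thesis
    unfolding odd_floor_def b by simp
qed

lemma odd_floor_ge_iff: "2 * k - 1 \<le> odd_floor t \<longleftrightarrow> 2 * of_int k - 1 \<le> t"
proof -
  have "2 * k - 1 \<le> odd_floor t \<longleftrightarrow> k \<le> \<lfloor>(t + 1) / 2\<rfloor>"
    unfolding odd_floor_def by linarith
  also have "\<dots> \<longleftrightarrow> 2 * of_int k - 1 \<le> t"
    by (simp add: le_floor_iff field_simps)
  finally show ?thesis .
qed

lemma odd_floor_divide:
  assumes "0 < m"
  shows "odd_floor (t / of_int m) = 2 * ((\<lfloor>t\<rfloor> + m) div (2 * m)) - 1"
proof -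
  have eq: "(t / of_int m + 1) / 2 = (t + of_int m) / real_of_int (2 * m)"
    using assms by (simp add: field_simps)
  have "\<lfloor>(t + of_int m) / real_of_int (2 * m)\<rfloor> = \<lfloor>t + of_int m\<rfloor> div (2 * m)"
    using assms by (intro floor_divide_real_eq_div) simp
  then show ?thesis
    unfolding odd_floor_def eq by simp
qed

lemma odd_floor_ratio:
  fixes a m d :: int and t :: real
  assumes a: "odd a" and m: "odd m" "1 \<le> m" and d: "even d" "\<bar>t - of_int d\<bar> < 1"
    and bounds: "real_of_int a \<le> of_int d / of_int m" "real_of_int d / of_int m < of_int a + 2"
  shows "odd_floor (t / of_int m) = a"
proof -
  have m_pos: "0 < real_of_int m"
    using m by simp
  have "a * m \<le> d" "d < (a + 2) * m"
    using bounds m_pos by (simp_all add: field_simps flip: of_int_mult of_int_add of_int_le_iff of_int_less_iff)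
  moreover have "a * m \<noteq> d" "(a + 2) * m \<noteq> d"
    using a m d by auto
  ultimately have "real_of_int (a * m) \<le> of_int (d - 1)" "real_of_int (d + 1) \<le> of_int ((a + 2) * m)"
    unfolding of_int_le_iff by linarith+
  then have "of_int a * of_int m < t" "t < (of_int a + 2) * of_int m"
    using d(2) by (auto simp: abs_less_iff)
  then show ?thesis
    using a m_pos by (intro odd_floor_eqI) (simp_all add: field_simps)
qed

text \<open>\<open>den\<close> and \<open>rescaled\<close> are \<open>m\<^sub>n\<close> and \<open>u\<^sub>n\<close> above; \<open>d\<^sub>n - s\<^sub>n\<close> is exactly the
  denominator \<open>d\<^sub>n \<mp> 1\<close> in the hypotheses on \<open>Y\<^sub>n\<^sub>+\<^sub>1\<close>.\<close>
definition den :: "nat \<Rightarrow> real \<Rightarrow> int" where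
  "den n x = (if n = 0 then 1 else dig n x - sgn_s n x)"

definition rescaled :: "nat \<Rightarrow> real \<Rightarrow> real" where
  "rescaled n x = of_int (den n x) * (Tmap ^^ n) x"

text \<open>\<open>Yodd (n + 1)\<close> is read off from \<open>u\<^sub>n\<close>.\<close>
definition Yodd :: "nat \<Rightarrow> real \<Rightarrow> int" where
  "Yodd n x = odd_floor (1 / rescaled (n - 1) x)"

text \<open>The map \<open>F\<close> above, written in terms of \<open>j = \<lfloor>1 / z\<rfloor>\<close>.\<close>
definition full_branch :: "real \<Rightarrow> real" where
  "full_branch z = (let j = \<lfloor>1 / z\<rfloor> in
     if odd j then of_int j * ((of_int j + 1) * z - 1) else (of_int j + 1) * (1 - of_int j * z))"

lemma full_branch_measurable [measurable]: "full_branch \<in> borel_measurable borel"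
  unfolding full_branch_def Let_def by measurable

lemma den_Suc:
  assumes "x \<in> Irr"
  shows "den (Suc n) x = 2 * (\<lfloor>1 / (Tmap ^^ n) x\<rfloor> div 2) + 1"
  using Irr_digits[OF orbit_Irr[OF assms, of n]]
  by (auto simp: den_def dig_def sgn_s_def elim: oddE evenE)

lemma den_odd_pos:
  assumes "x \<in> Irr"
  shows "odd (den n x) \<and> 1 \<le> den n x"
proof (cases n)
  case (Suc p)
  obtain j where "\<lfloor>1 / (Tmap ^^ p) x\<rfloor> = j" "1 \<le> j"
    using Irr_floor_inverse(3)[OF orbit_Irr[OF assms]] by blast
  then show ?thesis
    using den_Suc[OF assms, of p] Suc by simp
qed (simp add: den_def)

lemma rescaled_Suc:
  assumes "x \<in> Irr"
  shows "rescaled (Suc n) x = full_branch ((Tmap ^^ n) x)"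
  using Irr_digits[OF orbit_Irr[OF assms, of n]]
  by (simp add: rescaled_def den_def dig_def sgn_s_def full_branch_def Let_def)

lemma rescaled_step:
  assumes x: "x \<in> Irr"
  shows "den (Suc n) x = 2 * (\<lfloor>of_int (den n x) / rescaled n x\<rfloor> div 2) + 1"
    and "rescaled (Suc n) x = full_branch (rescaled n x / of_int (den n x))"
proof -
  have "0 < real_of_int (den n x)"
    using den_odd_pos[OF x, of n] by simp
  then have "(Tmap ^^ n) x = rescaled n x / of_int (den n x)"
    "1 / (Tmap ^^ n) x = of_int (den n x) / rescaled n x"
    by (simp_all add: rescaled_def)
  then show "den (Suc n) x = 2 * (\<lfloor>of_int (den n x) / rescaled n x\<rfloor> div 2) + 1"
    and "rescaled (Suc n) x = full_branch (rescaled n x / of_int (den n x))"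
    using den_Suc[OF x, of n] rescaled_Suc[OF x, of n] by simp_all
qed

lemma Yodd_Suc: "Yodd (Suc n) x = odd_floor (1 / rescaled n x)"
  by (simp add: Yodd_def)

lemma eps_Suc_Suc: "eps (Suc (Suc n)) x = eps (Suc n) x * sgn_s (Suc n) x"
  unfolding eps_def by (simp add: prod.atLeastLessThan_Suc)

lemma Y_eq_Yodd:
  fixes Y :: "nat \<Rightarrow> real \<Rightarrow> int"
  assumes odd: "\<And>n x. n \<ge> 1 \<Longrightarrow> x \<in> Irr \<Longrightarrow> odd (Y n x)"
    and first: "\<And>x. x \<in> Irr \<Longrightarrow> Y 1 x \<le> dig 1 x \<and> dig 1 x < Y 1 x + 2"
    and same: "\<And>n x. n \<ge> 2 \<Longrightarrow> x \<in> Irr \<Longrightarrow> eps n x = eps (n - 1) x \<Longrightarrow>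
         real_of_int (Y n x) \<le> real_of_int (dig n x) / real_of_int (dig (n - 1) x - 1) \<and>
         real_of_int (dig n x) / real_of_int (dig (n - 1) x - 1) < real_of_int (Y n x) + 2"
    and flip: "\<And>n x. n \<ge> 2 \<Longrightarrow> x \<in> Irr \<Longrightarrow> eps n x = - eps (n - 1) x \<Longrightarrow>
         real_of_int (Y n x) \<le> real_of_int (dig n x) / real_of_int (dig (n - 1) x + 1) \<and>
         real_of_int (dig n x) / real_of_int (dig (n - 1) x + 1) < real_of_int (Y n x) + 2"
    and x: "x \<in> Irr"
  shows "Y (Suc n) x = Yodd (Suc n) x"
proof -
  define z where "z = (Tmap ^^ n) x"
  have z: "z \<in> Irr"
    unfolding z_def using orbit_Irr[OF x] .
  have bounds: "real_of_int (Y (Suc n) x) \<le> real_of_int (dig (Suc n) x) / real_of_int (den n x)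
      \<and> real_of_int (dig (Suc n) x) / real_of_int (den n x) < real_of_int (Y (Suc n) x) + 2"
  proof (cases n)
    case 0
    then show ?thesis
      using first[OF x] by (simp add: den_def)
  next
    case (Suc p)
    have "sgn_s (Suc p) x = 1 \<or> sgn_s (Suc p) x = -1"
      using Irr_digits(2)[OF orbit_Irr[OF x, of p]] by (simp add: sgn_s_def)
    then show ?thesis
    proof
      assume "sgn_s (Suc p) x = 1"
      then show ?thesis
        using same[OF _ x, of "Suc (Suc p)"] Suc by (simp add: eps_Suc_Suc den_def)
    next
      assume "sgn_s (Suc p) x = -1"
      then show ?thesis
        using flip[OF _ x, of "Suc (Suc p)"] Suc by (simp add: eps_Suc_Suc den_def)
    qed
  qed
  obtain j where j: "\<lfloor>1 / z\<rfloor> = j" "of_int j < 1 / z" "1 / z < of_int j + 1"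
    using Irr_floor_inverse(4,5)[OF z] by blast
  have digit: "even (dig (Suc n) x)" "\<bar>1 / z - of_int (dig (Suc n) x)\<bar> < 1"
    using Irr_digits(1)[OF z] j by (auto simp: dig_def z_def[symmetric] abs_less_iff)
  have "odd_floor ((1 / z) / of_int (den n x)) = Y (Suc n) x"
    using odd_floor_ratio[OF odd[OF _ x] den_odd_pos[OF x, of n, THEN conjunct1]
        den_odd_pos[OF x, of n, THEN conjunct2] digit bounds[THEN conjunct1] bounds[THEN conjunct2]]
    by simp
  then show ?thesis
    by (simp add: Yodd_def rescaled_def z_def mult.commute)
qed

section \<open>Lebesgue measure of the full branches\<close>

lemma lebesgue_on_Irr:
  assumes "A \<in> sets borel"
  shows "Irr \<inter> A \<in> sets (lebesgue_on Irr)"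
    and "emeasure (lebesgue_on Irr) (Irr \<inter> A) = emeasure lborel (A \<inter> {0<..<1})"
proof -
  have Rats: "\<rat> \<in> null_sets lborel"
    by (intro countable_imp_null_set_lborel countable_rat)
  have Irr_borel: "Irr \<in> sets borel"
    unfolding Irr_def using null_setsD2[OF Rats] by auto
  then show "Irr \<inter> A \<in> sets (lebesgue_on Irr)"
    using assms by (simp add: sets_restrict_space_iff)
  have "emeasure (lebesgue_on Irr) (Irr \<inter> A) = emeasure lebesgue (Irr \<inter> A)"
    using Irr_borel by (intro emeasure_restrict_space) auto
  also have "\<dots> = emeasure lborel (Irr \<inter> A)"
    using Irr_borel assms by simp
  also have "\<dots> = emeasure lborel ((A \<inter> {0<..<1}) - \<rat>)"
    by (rule arg_cong[where f = "emeasure lborel"]) (auto simp: Irr_def)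
  also have "\<dots> = emeasure lborel (A \<inter> {0<..<1})"
    using assms Rats by (intro emeasure_Diff_null_set) auto
  finally show "emeasure (lebesgue_on Irr) (Irr \<inter> A) = emeasure lborel (A \<inter> {0<..<1})" .
qed

lemma prob_space_lebesgue_on_Irr: "prob_space (lebesgue_on Irr)"
  by (rule prob_spaceI) (use lebesgue_on_Irr(2)[of UNIV] in simp)

lemma emeasure_lborel_affine_vimage:
  fixes c t :: real
  assumes c: "c \<noteq> 0" and A: "A \<in> sets borel"
  shows "ennreal \<bar>c\<bar> * emeasure lborel ((\<lambda>x. t + c * x) -` A) = emeasure lborel A"
proof -
  have [measurable]: "(\<lambda>x. t + c * x) \<in> borel_measurable borel"
    by measurable
  have "emeasure lborel A = emeasure (density (distr lborel borel (\<lambda>x. t + c * x)) (\<lambda>_. ennreal \<bar>c\<bar>)) A"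
    using lborel_real_affine[OF c, of t] by simp
  also have "\<dots> = ennreal \<bar>c\<bar> * emeasure lborel ((\<lambda>x. t + c * x) -` A)"
    using A by (simp add: emeasure_density nn_integral_cmult_indicator emeasure_distr)
  finally show ?thesis ..
qed

lemma mem_reciprocal_branch_iff:
  fixes m u :: real and j :: int
  assumes "0 < m" "1 \<le> j"
  shows "u \<in> {m / (of_int j + 1)<..<m / of_int j} \<longleftrightarrow> 0 < u \<and> of_int j < m / u \<and> m / u < of_int j + 1"
proof -
  have "0 < real_of_int j"
    using assms(2) by simp
  then show ?thesis
    using assms(1) by (auto simp: field_simps)
qed

lemma floor_on_reciprocal_branch:
  fixes m u :: real and j :: int
  assumes "0 < m" "1 \<le> j" "u \<in> {m / (of_int j + 1)<..<m / of_int j}"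
  shows "\<lfloor>m / u\<rfloor> = j"
proof -
  have "of_int j < m / u \<and> m / u < of_int j + 1"
    using assms mem_reciprocal_branch_iff by blast
  then show ?thesis
    by (simp add: floor_eq_iff)
qed

lemma emeasure_full_branch_on_branch:
  fixes m :: real and j :: int
  assumes m: "0 < m" and j: "1 \<le> j" and V: "V \<in> sets borel"
  shows "emeasure lborel ({m / (of_int j + 1)<..<m / of_int j} \<inter> {u. full_branch (u / m) \<in> V})
       = emeasure lborel (V \<inter> {0<..<1}) * emeasure lborel {m / (of_int j + 1)<..<m / of_int j}"
proof -
  define I where "I = {m / (of_int j + 1)<..<m / of_int j}"
  define k where "k = of_int j * (of_int j + 1) / m"
  define c where "c = (if odd j then k else - k)"
  define t where "t = (if odd j then - of_int j else of_int j + 1 :: real)"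
  have j_pos: "0 < real_of_int j" "0 < real_of_int j * (of_int j + 1)"
    using j by simp_all
  have k: "0 < k" "m / (of_int j + 1) = of_int j / k" "m / of_int j = (of_int j + 1) / k"
    using m j_pos by (simp_all add: k_def field_simps)
  have c: "c \<noteq> 0" "\<bar>c\<bar> = k"
    using k(1) by (auto simp: c_def)
  have affine: "t + c * u = (if odd j then k * u - of_int j else of_int j + 1 - k * u)" for u
    by (simp add: c_def t_def)
  have in_I: "u \<in> I \<longleftrightarrow> of_int j < k * u \<and> k * u < of_int j + 1" for u
    unfolding I_def k(2,3) using k(1) by (simp add: divide_less_eq less_divide_eq mult.commute)
  have "full_branch (u / m) = t + c * u" if "u \<in> I" for u
    using floor_on_reciprocal_branch[OF m j that[unfolded I_def]] m
    by (simp add: full_branch_def affine k_def field_simps)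
  then have vimage: "I \<inter> {u. full_branch (u / m) \<in> W} = (\<lambda>u. t + c * u) -` (W \<inter> {0<..<1})" for W
    using in_I affine by (auto split: if_splits)
  have scale: "ennreal k * emeasure lborel (I \<inter> {u. full_branch (u / m) \<in> W}) = emeasure lborel (W \<inter> {0<..<1})"
    if "W \<in> sets borel" for W
    using emeasure_lborel_affine_vimage[OF c(1), of "W \<inter> {0<..<1}" t] that by (simp add: vimage c(2))
  have "emeasure lborel (I \<inter> {u. full_branch (u / m) \<in> V})
      = emeasure lborel (I \<inter> {u. full_branch (u / m) \<in> V}) * (ennreal k * emeasure lborel I)"
    using scale[of UNIV] by simp
  also have "\<dots> = (ennreal k * emeasure lborel (I \<inter> {u. full_branch (u / m) \<in> V})) * emeasure lborel I"
    by (simp only: ac_simps)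
  also have "\<dots> = emeasure lborel (V \<inter> {0<..<1}) * emeasure lborel I"
    by (simp only: scale[OF V])
  finally show ?thesis
    unfolding I_def .
qed

lemma reciprocal_branches_cover:
  fixes m :: int and u :: real
  assumes m: "1 \<le> m" and u: "u \<notin> range (\<lambda>k::int. of_int m / of_int k)"
  shows "u \<in> {0<..<1} \<longleftrightarrow> (\<exists>j\<ge>m. u \<in> {of_int m / (of_int j + 1)<..<of_int m / of_int j})"
proof
  assume u01: "u \<in> {0<..<1}"
  define j where "j = \<lfloor>of_int m / u\<rfloor>"
  have "of_int m < of_int m / u"
    using u01 m by (simp add: field_simps)
  then have "m \<le> j"
    by (simp add: j_def le_floor_iff)
  then have j_pos: "1 \<le> j" "0 < real_of_int j"
    using m by simp_all
  have "of_int j \<noteq> of_int m / u"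
  proof
    assume "of_int j = of_int m / u"
    then have "of_int j * u = of_int m"
      using u01 by (simp add: field_simps)
    then have "u = of_int m / of_int j"
      using j_pos(2) by (simp add: nonzero_eq_divide_eq mult.commute)
    then show False
      using u by auto
  qed
  then have "of_int j < of_int m / u" "of_int m / u < of_int j + 1"
    unfolding j_def by linarith+
  then have "u \<in> {of_int m / (of_int j + 1)<..<of_int m / of_int j}"
    using mem_reciprocal_branch_iff[of "of_int m" j u] m j_pos(1) u01 by simp
  then show "\<exists>j\<ge>m. u \<in> {of_int m / (of_int j + 1)<..<of_int m / of_int j}"
    using \<open>m \<le> j\<close> by blast
next
  assume "\<exists>j\<ge>m. u \<in> {of_int m / (of_int j + 1)<..<of_int m / of_int j}"
  then obtain j where j: "m \<le> j" "of_int m / (of_int j + 1) < u" "u < of_int m / of_int j"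
    by auto
  moreover have "of_int m / (of_int j + 1) > (0::real)" "of_int m / of_int j \<le> (1::real)"
    using j(1) m by simp_all
  ultimately show "u \<in> {0<..<1}"
    by simp
qed

lemma disjoint_family_reciprocal_branches:
  fixes m :: real
  assumes m: "0 < m"
  shows "disjoint_family_on (\<lambda>j::int. {m / (of_int j + 1)<..<m / of_int j}) {1..}"
  unfolding disjoint_family_on_def
proof (intro ballI impI)
  fix j k :: int
  assume "j \<in> {1..}" "k \<in> {1..}" "j \<noteq> k"
  then have "u \<notin> {m / (of_int j + 1)<..<m / of_int j} \<inter> {m / (of_int k + 1)<..<m / of_int k}" for u
    using floor_on_reciprocal_branch[OF m, of j u] floor_on_reciprocal_branch[OF m, of k u] by auto
  then show "{m / (of_int j + 1)<..<m / of_int j} \<inter> {m / (of_int k + 1)<..<m / of_int k} = {}"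
    by blast
qed

lemma emeasure_reciprocal_branches:
  fixes m :: int and S :: "real set"
  assumes m: "1 \<le> m" and S: "S \<in> sets borel"
  shows "emeasure lborel ({u \<in> {0<..<1}. P \<lfloor>of_int m / u\<rfloor>} \<inter> S)
       = (\<integral>\<^sup>+ j. emeasure lborel ({of_int m / (of_int j + 1)<..<of_int m / of_int j} \<inter> S) \<partial>count_space {j. m \<le> j \<and> P j})"
proof -
  define J where "J = {j. m \<le> j \<and> P j}"
  define I where "I j = {of_int m / (of_int j + 1)<..<of_int m / (of_int j :: real)}" for j :: int
  have m_pos: "0 < real_of_int m"
    using m by simp
  have floor_I: "\<lfloor>of_int m / u\<rfloor> = j" if "m \<le> j" "u \<in> I j" for j u
    using floor_on_reciprocal_branch[OF m_pos _ that(2)[unfolded I_def]] that(1) m by simp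
  have "AE u in lborel. u \<notin> range (\<lambda>k::int. of_int m / of_int k)"
    by (intro AE_not_in countable_imp_null_set_lborel) auto
  then have "AE u in lborel. u \<in> {u \<in> {0<..<1}. P \<lfloor>of_int m / u\<rfloor>} \<inter> S \<longleftrightarrow> u \<in> (\<Union>j\<in>J. I j \<inter> S)"
  proof eventually_elim
    case (elim u)
    note cover = reciprocal_branches_cover[OF m elim, folded I_def]
    show ?case
    proof
      assume u: "u \<in> {u \<in> {0<..<1}. P \<lfloor>of_int m / u\<rfloor>} \<inter> S"
      then obtain j where "m \<le> j" "u \<in> I j"
        using cover by auto
      then show "u \<in> (\<Union>j\<in>J. I j \<inter> S)"
        using u floor_I by (auto simp: J_def)
    next
      assume "u \<in> (\<Union>j\<in>J. I j \<inter> S)"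
      then obtain j where "m \<le> j" "P j" "u \<in> I j" "u \<in> S"
        by (auto simp: J_def)
      then show "u \<in> {u \<in> {0<..<1}. P \<lfloor>of_int m / u\<rfloor>} \<inter> S"
        using cover floor_I by auto
    qed
  qed
  then have "emeasure lborel ({u \<in> {0<..<1}. P \<lfloor>of_int m / u\<rfloor>} \<inter> S) = emeasure lborel (\<Union>j\<in>J. I j \<inter> S)"
    using S by (intro emeasure_eq_AE) (auto simp: I_def)
  also have "\<dots> = (\<integral>\<^sup>+ j. emeasure lborel (I j \<inter> S) \<partial>count_space J)"
  proof (rule emeasure_UN_countable)
    have "disjoint_family_on (\<lambda>j. I j) J"
      unfolding I_def J_def
      by (rule disjoint_family_on_mono[OF _ disjoint_family_reciprocal_branches[OF m_pos]]) (use m in auto)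
    then show "disjoint_family_on (\<lambda>j. I j \<inter> S) J"
      by (auto simp: disjoint_family_on_def)
  qed (use S in \<open>auto simp: I_def intro: countableI_type\<close>)
  finally show ?thesis
    by (simp add: J_def I_def)
qed

lemma emeasure_full_branch:
  fixes m :: int
  assumes m: "1 \<le> m" and V: "V \<in> sets borel"
  shows "emeasure lborel {u \<in> {0<..<1}. P \<lfloor>of_int m / u\<rfloor> \<and> full_branch (u / of_int m) \<in> V}
       = emeasure lborel (V \<inter> {0<..<1}) * emeasure lborel {u \<in> {0<..<1::real}. P \<lfloor>of_int m / u\<rfloor>}"
proof -
  define J where "J = {j. m \<le> j \<and> P j}"
  define I where "I j = {of_int m / (of_int j + 1)<..<of_int m / (of_int j :: real)}" for j :: int
  have m_pos: "0 < real_of_int m"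
    using m by simp
  have S: "{u. full_branch (u / of_int m) \<in> V} \<in> sets borel"
    using V by measurable
  have "{u \<in> {0<..<1}. P \<lfloor>of_int m / u\<rfloor> \<and> full_branch (u / of_int m) \<in> V}
      = {u \<in> {0<..<1}. P \<lfloor>of_int m / u\<rfloor>} \<inter> {u. full_branch (u / of_int m) \<in> V}"
    by auto
  also have "emeasure lborel \<dots> = (\<integral>\<^sup>+ j. emeasure lborel (I j \<inter> {u. full_branch (u / of_int m) \<in> V}) \<partial>count_space J)"
    unfolding J_def I_def by (rule emeasure_reciprocal_branches[OF m S])
  also have "\<dots> = (\<integral>\<^sup>+ j. emeasure lborel (V \<inter> {0<..<1}) * emeasure lborel (I j) \<partial>count_space J)"
    using emeasure_full_branch_on_branch[OF m_pos _ V] m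
    by (intro nn_integral_cong) (auto simp: J_def I_def)
  also have "\<dots> = emeasure lborel (V \<inter> {0<..<1}) * emeasure lborel {u \<in> {0<..<1::real}. P \<lfloor>of_int m / u\<rfloor>}"
    using emeasure_reciprocal_branches[OF m, of UNIV P] by (simp add: nn_integral_cmult J_def I_def)
  finally show ?thesis .
qed

section \<open>Conditional uniformity of the rescaled orbit\<close>

definition past_event :: "nat \<Rightarrow> (nat \<Rightarrow> int set) \<Rightarrow> int set \<Rightarrow> real set" where
  "past_event n B M = {x \<in> Irr. (\<forall>i\<in>{1..n}. Yodd i x \<in> B i) \<and> den n x \<in> M}"

text \<open>Given \<open>m\<^sub>n = m\<close>, the values of \<open>u\<^sub>n\<close> leading to \<open>Y\<^sub>n\<^sub>+\<^sub>1 \<in> C\<close>, \<open>m\<^sub>n\<^sub>+\<^sub>1 \<in> M\<close> and \<open>u\<^sub>n\<^sub>+\<^sub>1 \<in> W\<close>.\<close>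
definition transition :: "int \<Rightarrow> int set \<Rightarrow> int set \<Rightarrow> real set \<Rightarrow> real set" where
  "transition m C M W = {u. odd_floor (1 / u) \<in> C \<and> 2 * (\<lfloor>of_int m / u\<rfloor> div 2) + 1 \<in> M
     \<and> full_branch (u / of_int m) \<in> W}"

lemma transition_borel:
  assumes [measurable]: "W \<in> sets borel"
  shows "transition m C M W \<in> sets borel"
  unfolding transition_def by measurable

lemma emeasure_transition:
  assumes m: "1 \<le> m" and W: "W \<in> sets borel"
  shows "emeasure lborel (transition m C M W \<inter> {0<..<1})
       = emeasure lborel (W \<inter> {0<..<1}) * emeasure lborel (transition m C M UNIV \<inter> {0<..<1})"
proof -
  define P where "P j = (2 * ((j + m) div (2 * m)) - 1 \<in> C \<and> 2 * (j div 2) + 1 \<in> M)" for j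
  have "odd_floor (1 / u) = 2 * ((\<lfloor>of_int m / u\<rfloor> + m) div (2 * m)) - 1" for u
    using odd_floor_divide[of m "of_int m / u"] m by simp
  then have "transition m C M W' \<inter> {0<..<1}
      = {u \<in> {0<..<1}. P \<lfloor>of_int m / u\<rfloor> \<and> full_branch (u / of_int m) \<in> W'}" for W'
    by (auto simp: transition_def P_def)
  then show ?thesis
    using emeasure_full_branch[OF m W, of P] by simp
qed

lemma past_event_0: "past_event 0 B M = (if 1 \<in> M then Irr else {})"
  by (auto simp: past_event_def den_def)

lemma past_event_Suc_rescaled:
  "past_event (Suc n) B M \<inter> {x. rescaled (Suc n) x \<in> W}
     = (\<Union>m\<in>{1..}. past_event n B {m} \<inter> {x. rescaled n x \<in> transition m (B (Suc n)) M W})"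
  using den_odd_pos rescaled_step
  by (auto simp: past_event_def transition_def Yodd_Suc atLeastAtMostSuc_conv)

text \<open>Measurability is carried along the induction: it is never shown separately that \<open>T\<^sup>n\<close>
  is measurable.\<close>
lemma past_event_rescaled:
  assumes "V \<in> sets borel"
  shows "past_event n B M \<inter> {x. rescaled n x \<in> V} \<in> sets (lebesgue_on Irr) \<and>
    emeasure (lebesgue_on Irr) (past_event n B M \<inter> {x. rescaled n x \<in> V})
      = emeasure lborel (V \<inter> {0<..<1}) * emeasure (lebesgue_on Irr) (past_event n B M)"
  using assms
proof (induction n arbitrary: M V)
  case 0
  show ?case
  proof (cases "1 \<in> M")
    case True
    then have "past_event 0 B M \<inter> {x. rescaled 0 x \<in> V} = Irr \<inter> V" "past_event 0 B M = Irr \<inter> UNIV"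
      by (auto simp: past_event_0 rescaled_def den_def)
    then show ?thesis
      using lebesgue_on_Irr[OF 0] lebesgue_on_Irr(2)[of UNIV] by simp
  qed (simp add: past_event_0)
next
  case (Suc n)
  define T where "T m W = past_event n B {m} \<inter> {x. rescaled n x \<in> transition m (B (Suc n)) M W}" for m W
  have T: "T m W \<in> sets (lebesgue_on Irr)" "emeasure (lebesgue_on Irr) (T m W)
      = emeasure lborel (transition m (B (Suc n)) M W \<inter> {0<..<1}) * emeasure (lebesgue_on Irr) (past_event n B {m})"
    if "W \<in> sets borel" for m W
    using Suc.IH[OF transition_borel[OF that]] by (simp_all add: T_def)
  have step: "past_event (Suc n) B M \<inter> {x. rescaled (Suc n) x \<in> W} \<in> sets (lebesgue_on Irr)
      \<and> emeasure (lebesgue_on Irr) (past_event (Suc n) B M \<inter> {x. rescaled (Suc n) x \<in> W})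
        = (\<integral>\<^sup>+ m. emeasure (lebesgue_on Irr) (T m W) \<partial>count_space {1..})"
    if "W \<in> sets borel" for W
    unfolding past_event_Suc_rescaled T_def[symmetric] using T(1)[OF that]
    by (auto intro!: emeasure_UN_countable countableI_type simp: disjoint_family_on_def T_def past_event_def)
  have "(\<integral>\<^sup>+ m. emeasure (lebesgue_on Irr) (T m V) \<partial>count_space {1..})
      = (\<integral>\<^sup>+ m. emeasure lborel (V \<inter> {0<..<1}) * emeasure (lebesgue_on Irr) (T m UNIV) \<partial>count_space {1..})"
    using T Suc.prems emeasure_transition[OF _ Suc.prems] by (intro nn_integral_cong) (simp add: mult.assoc)
  then show ?case
    using step[OF Suc.prems] step[of UNIV] by (simp add: nn_integral_cmult)
qed

section \<open>Laws of the odd digits\<close>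

definition odd_floor_recip_law :: "int set \<Rightarrow> real" where
  "odd_floor_recip_law C = measure lborel ({u. odd_floor (1 / u) \<in> C} \<inter> {0<..<1})"

lemma odd_floor_recip_law_UNIV: "odd_floor_recip_law UNIV = 1"
  by (simp add: odd_floor_recip_law_def)

lemma odd_floor_recip_law_tail:
  assumes k: "1 \<le> k"
  shows "odd_floor_recip_law {a. 2 * int k - 1 \<le> a} = 1 / (2 * real k - 1)"
proof -
  define c where "c = 1 / (2 * real k - 1)"
  have k_pos: "0 < 2 * real k - 1"
    using k by simp
  have c: "0 < c" "c \<le> 1"
    using k k_pos by (simp_all add: c_def field_simps)
  have "2 * int k - 1 \<le> odd_floor (1 / u) \<longleftrightarrow> u \<le> c" if "0 < u" for u
    using odd_floor_ge_iff[of "int k" "1 / u"] that k_pos by (simp add: c_def field_simps)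
  then have "{u. odd_floor (1 / u) \<in> {a. 2 * int k - 1 \<le> a}} \<inter> {0<..<1} = {0<..c} - {1}"
    using c by auto
  also have "measure lborel \<dots> = measure lborel {0<..c}"
    by (intro measure_Diff_null_set countable_imp_null_set_lborel) auto
  finally show ?thesis
    using c by (simp add: odd_floor_recip_law_def c_def)
qed

lemma Yodd_joint_law:
  "{x \<in> Irr. \<forall>i\<in>{1..n}. Yodd i x \<in> B i} \<in> sets (lebesgue_on Irr) \<and>
   measure (lebesgue_on Irr) {x \<in> Irr. \<forall>i\<in>{1..n}. Yodd i x \<in> B i} = (\<Prod>i=1..n. odd_floor_recip_law (B i))"
proof (induction n)
  case 0
  show ?case
    using lebesgue_on_Irr[of UNIV] by (simp add: measure_def)
next
  case (Suc n)
  define C where "C = {u :: real. odd_floor (1 / u) \<in> B (Suc n)}"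
  have C: "C \<in> sets borel"
    unfolding C_def by measurable
  have "{x \<in> Irr. \<forall>i\<in>{1..n}. Yodd i x \<in> B i} = past_event n B UNIV"
    by (simp add: past_event_def)
  moreover have "{x \<in> Irr. \<forall>i\<in>{1..Suc n}. Yodd i x \<in> B i} = past_event n B UNIV \<inter> {x. rescaled n x \<in> C}"
    by (auto simp: past_event_def C_def Yodd_Suc atLeastAtMostSuc_conv)
  ultimately show ?case
    using past_event_rescaled[OF C, of n B UNIV] Suc.IH
    by (simp add: measure_def enn2real_mult odd_floor_recip_law_def C_def mult.commute)
qed

lemma joint_law_finite:
  fixes Y :: "nat \<Rightarrow> real \<Rightarrow> int"
  assumes Y: "\<And>n x. 1 \<le> n \<Longrightarrow> x \<in> Irr \<Longrightarrow> Y n x = Yodd n x" and J: "finite J" "J \<subseteq> {1..}"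
  shows "{x \<in> Irr. \<forall>j\<in>J. Y j x \<in> B j} \<in> sets (lebesgue_on Irr) \<and>
    measure (lebesgue_on Irr) {x \<in> Irr. \<forall>j\<in>J. Y j x \<in> B j} = (\<Prod>j\<in>J. odd_floor_recip_law (B j))"
proof -
  obtain N where "\<forall>j\<in>J. j \<le> N"
    using J(1) finite_nat_set_iff_bounded_le by blast
  then have N: "J \<subseteq> {1..N}"
    using J(2) by auto
  define B' where "B' i = (if i \<in> J then B i else UNIV)" for i
  have "Y j x = Yodd j x" if "j \<in> J" "x \<in> Irr" for j x
    using Y that N by auto
  then have "{x \<in> Irr. \<forall>j\<in>J. Y j x \<in> B j} = {x \<in> Irr. \<forall>i\<in>{1..N}. Yodd i x \<in> B' i}"
    using N by (auto simp: B'_def)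
  moreover have "(\<Prod>i=1..N. odd_floor_recip_law (B' i)) = (\<Prod>j\<in>J. odd_floor_recip_law (B j))"
    using N by (intro prod.mono_neutral_cong_right) (auto simp: B'_def odd_floor_recip_law_UNIV)
  ultimately show ?thesis
    using Yodd_joint_law[of N B'] by simp
qed

lemma tail_bounds_of_odd_tails:
  fixes f :: "'a \<Rightarrow> int" and t :: real
  assumes odd: "\<And>x. x \<in> A \<Longrightarrow> odd (f x)"
    and tail: "\<And>k::nat. 1 \<le> k \<Longrightarrow> measure M {x \<in> A. 2 * int k - 1 \<le> f x} = 1 / (2 * real k - 1)"
    and t: "0 < t"
  shows "1 / (t + 2) < measure M {x \<in> A. t \<le> of_int (f x)} \<and> measure M {x \<in> A. t \<le> of_int (f x)} \<le> 1 / t"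
proof -
  define c where "c = \<lceil>(t + 1) / 2\<rceil>"
  define k where "k = nat c"
  have "(t + 1) / 2 \<le> of_int c" "of_int c < (t + 1) / 2 + 1"
    unfolding c_def by linarith+
  then have "t + 1 \<le> 2 * of_int c" "2 * of_int c < t + 3"
    by (simp_all add: field_simps)
  moreover from this(1) have "1 \<le> c"
    using t by simp
  ultimately have k: "1 \<le> k" "t \<le> 2 * real k - 1" "2 * real k - 1 < t + 2"
    unfolding k_def by simp_all
  have "t \<le> of_int (f x) \<longleftrightarrow> 2 * int k - 1 \<le> f x" if "x \<in> A" for x
  proof
    assume "t \<le> of_int (f x)"
    then have "2 * int k - 2 \<le> f x"
      using k(3) by linarith
    moreover have "f x \<noteq> 2 * int k - 2"
      using odd[OF that] by auto
    ultimately show "2 * int k - 1 \<le> f x"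
      by linarith
  next
    assume "2 * int k - 1 \<le> f x"
    then show "t \<le> of_int (f x)"
      using k(2) by linarith
  qed
  then have "measure M {x \<in> A. t \<le> of_int (f x)} = 1 / (2 * real k - 1)"
    using tail[OF k(1)] by (metis (no_types, lifting) Collect_cong)
  moreover have "1 / (t + 2) < 1 / (2 * real k - 1)" "1 / (2 * real k - 1) \<le> 1 / t"
    using k t by (simp_all add: frac_less2 frac_le)
  ultimately show ?thesis
    by simp
qed

lemma (in prob_space) indep_vars_count_spaceI:
  assumes rv: "\<And>i. i \<in> I \<Longrightarrow> X i \<in> M \<rightarrow>\<^sub>M count_space UNIV"
    and prod: "\<And>J B. finite J \<Longrightarrow> J \<noteq> {} \<Longrightarrow> J \<subseteq> I \<Longrightarrow>
      prob {x \<in> space M. \<forall>j\<in>J. X j x \<in> B j} = (\<Prod>j\<in>J. prob (X j -` B j \<inter> space M))"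
  shows "indep_vars (\<lambda>_. count_space UNIV) X I"
  unfolding indep_vars_def2
proof (intro conjI ballI indep_setsI)
  show "random_variable (count_space UNIV) (X i)" if "i \<in> I" for i
    using rv[OF that] .
  show "{X i -` C \<inter> space M |C. C \<in> sets (count_space UNIV)} \<subseteq> events" if "i \<in> I" for i
    using measurable_sets[OF rv[OF that]] by blast
next
  fix A J
  assume J: "J \<noteq> {}" "J \<subseteq> I" "finite J"
    and "\<forall>j\<in>J. A j \<in> {X j -` C \<inter> space M |C. C \<in> sets (count_space UNIV)}"
  then have "\<forall>j\<in>J. \<exists>C. A j = X j -` C \<inter> space M"
    by blast
  then obtain B where "\<forall>j\<in>J. A j = X j -` B j \<inter> space M"
    by (rule bchoice[THEN exE])
  moreover from this have "(\<Inter>j\<in>J. A j) = {x \<in> space M. \<forall>j\<in>J. X j x \<in> B j}"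
    using J(1) by auto
  ultimately show "prob (\<Inter>j\<in>J. A j) = (\<Prod>j\<in>J. prob (A j))"
    using prod[OF J(3,1,2), of B] by simp
qed

lemma (in prob_space) iid_count_space_vars:
  fixes X :: "'i \<Rightarrow> 'a \<Rightarrow> 'b"
  assumes joint: "\<And>J B. finite J \<Longrightarrow> J \<subseteq> I \<Longrightarrow>
      {x \<in> space M. \<forall>j\<in>J. X j x \<in> B j} \<in> events \<and> prob {x \<in> space M. \<forall>j\<in>J. X j x \<in> B j} = (\<Prod>j\<in>J. L (B j))"
  shows "indep_vars (\<lambda>_. count_space UNIV) X I"
    and "i \<in> I \<Longrightarrow> j \<in> I \<Longrightarrow> distr M (count_space UNIV) (X i) = distr M (count_space UNIV) (X j)"
proof -
  have marginal: "X i -` C \<inter> space M \<in> events" "prob (X i -` C \<inter> space M) = L C" if "i \<in> I" for i C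
  proof -
    have "X i -` C \<inter> space M = {x \<in> space M. \<forall>j\<in>{i}. X j x \<in> C}"
      by auto
    then show "X i -` C \<inter> space M \<in> events" "prob (X i -` C \<inter> space M) = L C"
      using joint[of "{i}" "\<lambda>_. C"] that by simp_all
  qed
  have rv: "X i \<in> M \<rightarrow>\<^sub>M count_space UNIV" if "i \<in> I" for i
    using marginal(1)[OF that] by (intro measurableI) simp_all
  show "indep_vars (\<lambda>_. count_space UNIV) X I"
    using rv joint marginal(2) by (intro indep_vars_count_spaceI) (simp_all add: subset_iff)
  show "distr M (count_space UNIV) (X i) = distr M (count_space UNIV) (X j)" if "i \<in> I" "j \<in> I"
  proof (rule measure_eqI)
    fix C :: "'b set"
    have "emeasure (distr M (count_space UNIV) (X k)) C = ennreal (L C)" if "k \<in> I" for k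
      using rv[OF that] marginal[OF that, of C] by (simp add: emeasure_distr emeasure_eq_measure)
    then show "emeasure (distr M (count_space UNIV) (X i)) C = emeasure (distr M (count_space UNIV) (X j)) C"
      using \<open>i \<in> I\<close> \<open>j \<in> I\<close> by simp
  qed simp
qed

theorem lemma3p7:
  fixes Y :: "nat \<Rightarrow> real \<Rightarrow> int"
  assumes odd: "\<And>n x. n \<ge> 1 \<Longrightarrow> x \<in> Irr \<Longrightarrow> odd (Y n x)"
    and first: "\<And>x. x \<in> Irr \<Longrightarrow> Y 1 x \<le> dig 1 x \<and> dig 1 x < Y 1 x + 2"
    and same: "\<And>n x. n \<ge> 2 \<Longrightarrow> x \<in> Irr \<Longrightarrow> eps n x = eps (n - 1) x \<Longrightarrow>
         real_of_int (Y n x) \<le> real_of_int (dig n x) / real_of_int (dig (n - 1) x - 1) \<and>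
         real_of_int (dig n x) / real_of_int (dig (n - 1) x - 1) < real_of_int (Y n x) + 2"
    and flip: "\<And>n x. n \<ge> 2 \<Longrightarrow> x \<in> Irr \<Longrightarrow> eps n x = - eps (n - 1) x \<Longrightarrow>
         real_of_int (Y n x) \<le> real_of_int (dig n x) / real_of_int (dig (n - 1) x + 1) \<and>
         real_of_int (dig n x) / real_of_int (dig (n - 1) x + 1) < real_of_int (Y n x) + 2"
  shows "(\<forall>n k::nat. n \<ge> 1 \<longrightarrow> k \<ge> 1 \<longrightarrow>
            measure (lebesgue_on Irr) {x \<in> Irr. Y n x \<ge> 2 * int k - 1} = 1 / (2 * real k - 1))
       \<and> (\<forall>(n::nat) (t::real). n \<ge> 1 \<longrightarrow> t > 0 \<longrightarrow>
            1 / (t + 2) < measure (lebesgue_on Irr) {x \<in> Irr. real_of_int (Y n x) \<ge> t} \<and>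
            measure (lebesgue_on Irr) {x \<in> Irr. real_of_int (Y n x) \<ge> t} \<le> 1 / t)
       \<and> prob_space.indep_vars (lebesgue_on Irr) (\<lambda>_. count_space UNIV) Y {1..}
       \<and> (\<forall>n m. n \<ge> 1 \<longrightarrow> m \<ge> 1 \<longrightarrow>
            distr (lebesgue_on Irr) (count_space UNIV) (Y n)
          = distr (lebesgue_on Irr) (count_space UNIV) (Y m))"
proof -
  interpret prob_space "lebesgue_on Irr"
    by (rule prob_space_lebesgue_on_Irr)
  have Y_Yodd: "Y n x = Yodd n x" if "1 \<le> n" "x \<in> Irr" for n x
    using Y_eq_Yodd[OF odd first same flip that(2), of "n - 1"] that(1) by simp
  have joint: "{x \<in> Irr. \<forall>j\<in>J. Y j x \<in> B j} \<in> events \<and>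
      prob {x \<in> Irr. \<forall>j\<in>J. Y j x \<in> B j} = (\<Prod>j\<in>J. odd_floor_recip_law (B j))"
    if "finite J" "J \<subseteq> {1..}" for J B
    using joint_law_finite[OF Y_Yodd that] by simp
  have tail: "prob {x \<in> Irr. 2 * int k - 1 \<le> Y n x} = 1 / (2 * real k - 1)" if "1 \<le> n" "1 \<le> k" for n k
    using joint[of "{n}" "\<lambda>_. {a. 2 * int k - 1 \<le> a}"] odd_floor_recip_law_tail[OF that(2)] that(1) by simp
  have iid: "indep_vars (\<lambda>_. count_space UNIV) Y {1..}"
    "n \<in> {1..} \<Longrightarrow> m \<in> {1..} \<Longrightarrow> distr (lebesgue_on Irr) (count_space UNIV) (Y n)
      = distr (lebesgue_on Irr) (count_space UNIV) (Y m)" for n m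
    by (rule iid_count_space_vars[where I = "{1..}" and L = odd_floor_recip_law]; simp add: joint)+
  have bounds: "1 / (t + 2) < prob {x \<in> Irr. t \<le> of_int (Y n x)} \<and> prob {x \<in> Irr. t \<le> of_int (Y n x)} \<le> 1 / t"
    if "1 \<le> n" "0 < t" for n t
    using tail_bounds_of_odd_tails[OF odd tail] that by blast
  show ?thesis
    by (intro conjI allI impI tail bounds[THEN conjunct1] bounds[THEN conjunct2] iid) simp_all
qed

end
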